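(* Let $X$ be a nontrivial real Hausdorff locally convex space, let $g\in\Gamma(X)$ be sublinear and let $x^{\ast}\in X^{\ast}$. Set $L_{x^{\ast}}:=\{x\in X: g(x)=\langle x,x^{\ast}\rangle,\ g(-x)=-\langle x,x^{\ast}\rangle\}$. The following assertions are equivalent: (a) $x^{\ast}\in\operatorname{qri}\partial g(0)$; (b) $[g\le x^{\ast}]$ is a linear space; (b') $L_{x^{\ast}}=[g\le x^{\ast}]$; (c) $x^{\ast}\in\partial g(0)$ and $[g=x^{\ast}]$ is a linear space; (c') $x^{\ast}\in\partial g(0)$ and $L_{x^{\ast}}=[g=x^{\ast}]$.
   Context: $X^{\ast}$ is the topological dual of $X$ endowed with the weak$^{\ast}$ topology; closures in $X^{\ast}$ are weak$^{\ast}$ closures; $\langle x,x^{\ast}\rangle:=x^{\ast}(x)$. $\Gamma(X)$ is the set of proper lower semicontinuous convex functions $X\to\mathbb{R}\cup\{\pm\infty\}$. $\partial g(0)=\{x^{\ast}:\langle x',x^{\ast}\rangle\le g(x')\ \forall x'\in X\}$. $[g\le x^{\ast}]:=\{x\in X: g(x)\le\langle x,x^{\ast}\rangle\}$, $[g=x^{\ast}]:=\{x\in X: g(x)=\langle x,x^{\ast}\rangle\}$. For convex $B\subset X^{\ast}$, $\operatorname{qri}B=\{b\in B:\overline{\mathbb{R}_+(B-b)}\text{ is a linear subspace}\}$. *)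

theory Defs
  imports "HOL-Analysis.Analysis"
begin

definition locally_convex_tvs :: "'a::{real_vector,t2_space} itself \<Rightarrow> bool" where
  "locally_convex_tvs _ \<longleftrightarrow>
     continuous_on (UNIV :: ('a \<times> 'a) set) (\<lambda>(x, y). x + y) \<and>
     continuous_on (UNIV :: (real \<times> 'a) set) (\<lambda>(t, x). t *\<^sub>R x) \<and>
     (\<forall>U::'a set. open U \<and> 0 \<in> U \<longrightarrow> (\<exists>V. open V \<and> convex V \<and> 0 \<in> V \<and> V \<subseteq> U))"

definition topdual :: "('a::{real_vector,topological_space} \<Rightarrow> real) set" where
  "topdual = {f. linear f \<and> continuous_on UNIV f}"

text \<open>Weak-star closure in the dual: the weak-star topology on the dual is the subspace
  topology induced by the product (pointwise convergence) topology on functions.\<close>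
definition wstar_closure :: "('a::{real_vector,topological_space} \<Rightarrow> real) set \<Rightarrow> ('a \<Rightarrow> real) set" where
  "wstar_closure B = topdual \<inter> closure B"

definition fun_subspace :: "('a \<Rightarrow> real) set \<Rightarrow> bool" where
  "fun_subspace S \<longleftrightarrow> (\<lambda>x. 0) \<in> S \<and> (\<forall>f\<in>S. \<forall>h\<in>S. (\<lambda>x. f x + h x) \<in> S)
      \<and> (\<forall>c. \<forall>f\<in>S. (\<lambda>x. c * f x) \<in> S)"

definition qri :: "('a::{real_vector,topological_space} \<Rightarrow> real) set \<Rightarrow> ('a \<Rightarrow> real) set" where
  "qri B = {b \<in> B. fun_subspace (wstar_closure {(\<lambda>x. t * (y x - b x)) | t y. t \<ge> 0 \<and> y \<in> B})}"

definition proper_fun :: "('a \<Rightarrow> ereal) \<Rightarrow> bool" where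
  "proper_fun g \<longleftrightarrow> (\<forall>x. g x \<noteq> -\<infinity>) \<and> (\<exists>x. g x \<noteq> \<infinity>)"

definition lsc_fun :: "('a::topological_space \<Rightarrow> ereal) \<Rightarrow> bool" where
  "lsc_fun g \<longleftrightarrow> (\<forall>c::real. closed {x. g x \<le> ereal c})"

definition convex_efun :: "('a::real_vector \<Rightarrow> ereal) \<Rightarrow> bool" where
  "convex_efun g \<longleftrightarrow> convex {(x, r::real). g x \<le> ereal r}"

definition Gamma :: "('a::{real_vector,topological_space} \<Rightarrow> ereal) set" where
  "Gamma = {g. proper_fun g \<and> lsc_fun g \<and> convex_efun g}"

definition sublinear_efun :: "('a::real_vector \<Rightarrow> ereal) \<Rightarrow> bool" where
  "sublinear_efun g \<longleftrightarrow> (\<forall>x y. g (x + y) \<le> g x + g y)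
     \<and> (\<forall>t::real. \<forall>x. t > 0 \<longrightarrow> g (t *\<^sub>R x) = ereal t * g x)"

definition subdiff0 :: "('a::{real_vector,topological_space} \<Rightarrow> ereal) \<Rightarrow> ('a \<Rightarrow> real) set" where
  "subdiff0 g = {xs \<in> topdual. \<forall>x. ereal (xs x) \<le> g x}"

definition le_set :: "('a \<Rightarrow> ereal) \<Rightarrow> ('a \<Rightarrow> real) \<Rightarrow> 'a set" where
  "le_set g xs = {x. g x \<le> ereal (xs x)}"

definition eq_set :: "('a \<Rightarrow> ereal) \<Rightarrow> ('a \<Rightarrow> real) \<Rightarrow> 'a set" where
  "eq_set g xs = {x. g x = ereal (xs x)}"

definition Lset :: "('a::real_vector \<Rightarrow> ereal) \<Rightarrow> ('a \<Rightarrow> real) \<Rightarrow> 'a set" where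
  "Lset g xs = {x. g x = ereal (xs x) \<and> g (- x) = ereal (- xs x)}"

end

theory Submission
  imports Defs
begin

text \<open>The weak-star closed cone generated by \<open>\<partial>g(0) - x\<^sup>*\<close> is the polar of \<open>[g \<le> x\<^sup>*]\<close>.
  One inclusion is immediate. For the other, weak-star neighbourhoods see only finitely many
  points, so a functional outside the closure is separated from the cone by a finite
  combination \<open>v\<close> of points; since \<open>g\<close> is lower semicontinuous and sublinear, Hahn--Banach
  makes it the support function of \<open>\<partial>g(0)\<close>, and the separation then says \<open>v \<in> [g \<le> x\<^sup>*]\<close>.
  Hence \<open>x\<^sup>* \<in> qri \<partial>g(0)\<close> iff this polar is a linear space iff \<open>[g \<le> x\<^sup>*]\<close> is one. The other
  equivalences are elementary: on a linear space inside \<open>[g \<le> x\<^sup>*]\<close>, subadditivity and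
  \<open>g(0) = 0\<close> force \<open>g(x) = x\<^sup>*(x)\<close> and \<open>g(-x) = -x\<^sup>*(x)\<close>, and \<open>x\<^sup>* \<in> \<partial>g(0)\<close> makes
  \<open>[g = x\<^sup>*]\<close> and \<open>[g \<le> x\<^sup>*]\<close> coincide.\<close>

section \<open>Sublinear functionals and the Hahn--Banach theorem\<close>

definition sublinear :: "('a::real_vector \<Rightarrow> real) \<Rightarrow> bool" where
  "sublinear p \<longleftrightarrow> (\<forall>x y. p (x + y) \<le> p x + p y) \<and> (\<forall>t x. t > 0 \<longrightarrow> p (t *\<^sub>R x) = t * p x)"

lemma sublinear_add: "sublinear p \<Longrightarrow> p (x + y) \<le> p x + p y"
  by (simp add: sublinear_def)

lemma sublinear_scaleR: "sublinear p \<Longrightarrow> t > 0 \<Longrightarrow> p (t *\<^sub>R x) = t * p x"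
  by (simp add: sublinear_def)

lemma sublinear_zero: "sublinear p \<Longrightarrow> p 0 = 0"
  using sublinear_scaleR[of p 2 0] by simp

lemma sublinear_scaleR_nonneg: "sublinear p \<Longrightarrow> t \<ge> 0 \<Longrightarrow> p (t *\<^sub>R x) = t * p x"
  by (cases "t = 0") (auto simp: sublinear_zero sublinear_scaleR)

lemma sublinear_neg_le: "sublinear p \<Longrightarrow> - p (- x) \<le> p x"
  using sublinear_add[of p x "-x"] sublinear_zero[of p] by simp

text \<open>The classical device of the Zorn-lemma proof of Hahn--Banach: \<open>flatten_along x p\<close> is a
  sublinear function below \<open>p\<close> with \<open>flatten_along x p (-x) \<le> - p x\<close>, so a minimal sublinear
  function is odd, hence linear.\<close>

definition flatten_along :: "'a::real_vector \<Rightarrow> ('a \<Rightarrow> real) \<Rightarrow> 'a \<Rightarrow> real" where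
  "flatten_along x p y = (INF t\<in>{0..}. p (y + t *\<^sub>R x) - t * p x)"

lemma flatten_along_le_at:
  assumes p: "sublinear p" and t: "t \<ge> 0"
  shows "flatten_along x p y \<le> p (y + t *\<^sub>R x) - t * p x"
  unfolding flatten_along_def
proof (rule cInf_lower)
  show "bdd_below ((\<lambda>t. p (y + t *\<^sub>R x) - t * p x) ` {0..})"
  proof (rule bdd_belowI2)
    fix s :: real assume "s \<in> {0..}"
    then have "s * p x = p (s *\<^sub>R x)" using sublinear_scaleR_nonneg[OF p] by simp
    also have "\<dots> \<le> p (y + s *\<^sub>R x) + p (-y)"
      using sublinear_add[OF p, of "y + s *\<^sub>R x" "-y"] by simp
    finally show "- p (-y) \<le> p (y + s *\<^sub>R x) - s * p x" by simp
  qed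
qed (use t in auto)

lemma flatten_along_greatest:
  "(\<And>t. t \<ge> 0 \<Longrightarrow> c \<le> p (y + t *\<^sub>R x) - t * p x) \<Longrightarrow> c \<le> flatten_along x p y"
  unfolding flatten_along_def by (intro cInf_greatest) auto

lemma flatten_along_le: "sublinear p \<Longrightarrow> flatten_along x p y \<le> p y"
  using flatten_along_le_at[of p 0 x y] by simp

lemma flatten_along_neg: "sublinear p \<Longrightarrow> flatten_along x p (- x) \<le> - p x"
  using flatten_along_le_at[of p 1 x "-x"] sublinear_zero[of p] by simp

lemma sublinear_flatten_along:
  assumes p: "sublinear p"
  shows "sublinear (flatten_along x p)"
  unfolding sublinear_def
proof (intro conjI allI impI)
  fix y1 y2
  have "flatten_along x p (y1 + y2) - flatten_along x p y2 \<le> flatten_along x p y1"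
  proof (rule flatten_along_greatest)
    fix t1 :: real assume t1: "t1 \<ge> 0"
    have "flatten_along x p (y1 + y2) - (p (y1 + t1 *\<^sub>R x) - t1 * p x) \<le> flatten_along x p y2"
    proof (rule flatten_along_greatest)
      fix t2 :: real assume t2: "t2 \<ge> 0"
      have "flatten_along x p (y1 + y2) \<le> p ((y1 + y2) + (t1 + t2) *\<^sub>R x) - (t1 + t2) * p x"
        using flatten_along_le_at[OF p, of "t1 + t2"] t1 t2 by simp
      also have "(y1 + y2) + (t1 + t2) *\<^sub>R x = (y1 + t1 *\<^sub>R x) + (y2 + t2 *\<^sub>R x)"
        by (simp add: algebra_simps)
      also have "p \<dots> \<le> p (y1 + t1 *\<^sub>R x) + p (y2 + t2 *\<^sub>R x)"
        using sublinear_add[OF p] by blast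
      finally show "flatten_along x p (y1 + y2) - (p (y1 + t1 *\<^sub>R x) - t1 * p x)
          \<le> p (y2 + t2 *\<^sub>R x) - t2 * p x"
        by (simp add: algebra_simps)
    qed
    then show "flatten_along x p (y1 + y2) - flatten_along x p y2 \<le> p (y1 + t1 *\<^sub>R x) - t1 * p x"
      by simp
  qed
  then show "flatten_along x p (y1 + y2) \<le> flatten_along x p y1 + flatten_along x p y2" by simp
next
  fix c :: real and y assume c: "c > 0"
  have "flatten_along x p (c *\<^sub>R y) / c \<le> flatten_along x p y"
  proof (rule flatten_along_greatest)
    fix t :: real assume t: "t \<ge> 0"
    have "flatten_along x p (c *\<^sub>R y) \<le> p (c *\<^sub>R y + (c * t) *\<^sub>R x) - (c * t) * p x"
      using flatten_along_le_at[OF p, of "c * t"] t c by simp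
    also have "c *\<^sub>R y + (c * t) *\<^sub>R x = c *\<^sub>R (y + t *\<^sub>R x)" by (simp add: algebra_simps)
    also have "p \<dots> = c * p (y + t *\<^sub>R x)" using sublinear_scaleR[OF p c] by simp
    finally show "flatten_along x p (c *\<^sub>R y) / c \<le> p (y + t *\<^sub>R x) - t * p x"
      using c by (simp add: field_simps)
  qed
  moreover have "c * flatten_along x p y \<le> flatten_along x p (c *\<^sub>R y)"
  proof (rule flatten_along_greatest)
    fix t :: real assume t: "t \<ge> 0"
    have "flatten_along x p y \<le> p (y + (t / c) *\<^sub>R x) - (t / c) * p x"
      using flatten_along_le_at[OF p, of "t / c"] t c by simp
    also have "y + (t / c) *\<^sub>R x = (1 / c) *\<^sub>R (c *\<^sub>R y + t *\<^sub>R x)"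
      using c by (simp add: algebra_simps)
    also have "p \<dots> = (1 / c) * p (c *\<^sub>R y + t *\<^sub>R x)" using sublinear_scaleR[OF p] c by simp
    finally show "c * flatten_along x p y \<le> p (c *\<^sub>R y + t *\<^sub>R x) - t * p x"
      using c by (simp add: field_simps)
  qed
  ultimately show "flatten_along x p (c *\<^sub>R y) = c * flatten_along x p y"
    using c by (simp add: field_simps)
qed

lemma linear_if_sublinear_flatten_along_eq:
  assumes p: "sublinear p" and flat: "\<And>x. flatten_along x p = p"
  shows "linear p"
proof -
  have neg: "p (- x) = - p x" for x
    using flatten_along_neg[OF p, of x] flat[of x] sublinear_neg_le[OF p, of x] by simp
  show ?thesis
  proof (rule linearI)
    fix x y
    show "p (x + y) = p x + p y"
      using sublinear_add[OF p, of x y] sublinear_add[OF p, of "-x" "-y"] neg[of "x + y"] neg[of x] neg[of y]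
      by simp
  next
    fix c :: real and x
    show "p (c *\<^sub>R x) = c *\<^sub>R p x"
    proof (cases "c \<ge> 0")
      case True
      then show ?thesis using sublinear_scaleR_nonneg[OF p] by simp
    next
      case False
      then have "p (c *\<^sub>R x) = - p ((- c) *\<^sub>R x)" using neg[of "(- c) *\<^sub>R x"] by simp
      then show ?thesis using sublinear_scaleR_nonneg[OF p, of "- c" x] False by simp
    qed
  qed
qed

lemma sublinear_INF_chain:
  assumes C: "C \<noteq> {}" "\<And>p. p \<in> C \<Longrightarrow> sublinear p"
    and chain: "\<And>p p'. p \<in> C \<Longrightarrow> p' \<in> C \<Longrightarrow> (\<forall>x. p x \<le> p' x) \<or> (\<forall>x. p' x \<le> p x)"
    and bdd: "\<And>x. bdd_below ((\<lambda>p. p x) ` C)"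
  shows "sublinear (\<lambda>x. INF p\<in>C. p x)"
proof -
  define u where "u x = (INF p\<in>C. p x)" for x
  have u_le: "u x \<le> p x" if "p \<in> C" for p x
    unfolding u_def using bdd that by (intro cInf_lower) auto
  have u_greatest: "c \<le> u x" if "\<And>p. p \<in> C \<Longrightarrow> c \<le> p x" for c x
    unfolding u_def using C(1) that by (intro cInf_greatest) auto
  have "sublinear u"
    unfolding sublinear_def
  proof (intro conjI allI impI)
    fix x y
    have "u (x + y) - u y \<le> u x"
    proof (rule u_greatest)
      fix p1 assume p1: "p1 \<in> C"
      have "u (x + y) - p1 x \<le> u y"
      proof (rule u_greatest)
        fix p2 assume p2: "p2 \<in> C"
        \<comment> \<open>the smaller of \<open>p1\<close>, \<open>p2\<close> is subadditive and bounds \<open>u\<close>\<close>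
        from chain[OF p1 p2] show "u (x + y) - p1 x \<le> p2 y"
          using u_le[OF p1, of "x + y"] u_le[OF p2, of "x + y"]
            sublinear_add[OF C(2)[OF p1], of x y] sublinear_add[OF C(2)[OF p2], of x y]
          by (smt (verit))
      qed
      then show "u (x + y) - u y \<le> p1 x" by simp
    qed
    then show "u (x + y) \<le> u x + u y" by simp
  next
    fix t :: real and x assume t: "t > 0"
    have "u (t *\<^sub>R x) / t \<le> u x"
    proof (rule u_greatest)
      fix p assume "p \<in> C"
      then show "u (t *\<^sub>R x) / t \<le> p x"
        using u_le[of p "t *\<^sub>R x"] sublinear_scaleR[OF C(2) t] t by (simp add: field_simps)
    qed
    moreover have "t * u x \<le> u (t *\<^sub>R x)"
    proof (rule u_greatest)
      fix p assume "p \<in> C"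
      then show "t * u x \<le> p (t *\<^sub>R x)"
        using u_le[of p x] sublinear_scaleR[OF C(2) t, of p x] t by simp
    qed
    ultimately show "u (t *\<^sub>R x) = t * u x" using t by (simp add: field_simps)
  qed
  then show ?thesis unfolding u_def[abs_def] .
qed

lemma exists_minimal_sublinear_below:
  assumes q: "sublinear q"
  shows "\<exists>m. sublinear m \<and> (\<forall>x. m x \<le> q x)
    \<and> (\<forall>p. sublinear p \<and> (\<forall>x. p x \<le> m x) \<longrightarrow> p = m)"
proof -
  define A where "A = {p. sublinear p \<and> (\<forall>x. p x \<le> q x)}"
  define P where "P = (\<lambda>p p' :: 'a \<Rightarrow> real. \<forall>x. p' x \<le> p x)"
  have po: "partial_order_on A (relation_of P A)"
    by (rule partial_order_on_relation_ofI)
      (auto simp: P_def fun_eq_iff intro: order.trans order.antisym)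
  have "\<exists>u\<in>A. \<forall>p\<in>C. P p u" if C: "C \<in> Chains (relation_of P A)" for C
  proof (cases "C = {}")
    case True
    then show ?thesis using q by (auto simp: A_def)
  next
    case False
    have CA: "C \<subseteq> A" using C by (rule Chains_relation_of)
    have chain: "P p p' \<or> P p' p" if "p \<in> C" "p' \<in> C" for p p'
      using C that unfolding Chains_def relation_of_def by auto
    have "- q (- x) \<le> p x" if "p \<in> C" for p x
    proof -
      have "sublinear p" "p (- x) \<le> q (- x)" using that CA by (auto simp: A_def)
      then show ?thesis using sublinear_neg_le[of p x] by linarith
    qed
    then have bdd: "bdd_below ((\<lambda>p. p x) ` C)" for x by (intro bdd_belowI2) auto
    define u where "u x = (INF p\<in>C. p x)" for x
    have "sublinear u"
      unfolding u_def using False CA chain bdd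
      by (intro sublinear_INF_chain) (auto simp: A_def P_def)
    moreover have u_le: "u x \<le> p x" if "p \<in> C" for p x
      unfolding u_def using that bdd by (intro cInf_lower) auto
    moreover obtain p0 where "p0 \<in> C" using False by auto
    then have "u x \<le> q x" for x
      using u_le[of p0 x] CA unfolding A_def by (blast intro: order.trans)
    ultimately show ?thesis by (auto simp: A_def P_def)
  qed
  from predicate_Zorn[OF po this] obtain m where m: "m \<in> A"
    and min: "\<And>p. p \<in> A \<Longrightarrow> P m p \<Longrightarrow> p = m"
    by blast
  show ?thesis
  proof (intro exI conjI allI impI)
    show "sublinear m" "m x \<le> q x" for x using m by (auto simp: A_def)
    fix p assume p: "sublinear p \<and> (\<forall>x. p x \<le> m x)"
    then have "p \<in> A" using m unfolding A_def by (blast intro: order.trans)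
    then show "p = m" using min p by (simp add: P_def)
  qed
qed

theorem sublinear_linear_minorant_at:
  assumes q: "sublinear q"
  shows "\<exists>l. linear l \<and> (\<forall>x. l x \<le> q x) \<and> l z = q z"
proof -
  have "sublinear (flatten_along z q)" using sublinear_flatten_along[OF q] .
  then obtain m where m: "sublinear m" "\<And>x. m x \<le> flatten_along z q x"
    and min: "\<And>p. sublinear p \<Longrightarrow> (\<And>x. p x \<le> m x) \<Longrightarrow> p = m"
    using exists_minimal_sublinear_below by metis
  have "flatten_along x m = m" for x
    using min[OF sublinear_flatten_along[OF m(1)]] flatten_along_le[OF m(1)] by metis
  then have lin: "linear m" using linear_if_sublinear_flatten_along_eq[OF m(1)] by blast
  have "m x \<le> q x" for x using m(2)[of x] flatten_along_le[OF q, of z x] by simp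
  moreover have "q z \<le> m z"
    using m(2)[of "- z"] flatten_along_neg[OF q, of z] linear_neg[OF lin, of z] by simp
  ultimately show ?thesis using lin by (intro exI[of _ m]) (auto intro: order.antisym)
qed

section \<open>Locally convex spaces\<close>

lemma lctvs_continuous_on_plus_const:
  assumes "locally_convex_tvs TYPE('a::{real_vector,t2_space})"
  shows "continuous_on UNIV (\<lambda>x::'a. x + a)"
proof -
  have "continuous_on UNIV (\<lambda>(x, y). x + y :: 'a)"
    using assms by (simp add: locally_convex_tvs_def)
  from continuous_on_compose2[OF this, of UNIV "\<lambda>x. (x, a)"]
  show ?thesis by (simp add: continuous_on_Pair)
qed

lemma lctvs_continuous_on_scaleR:
  assumes "locally_convex_tvs TYPE('a::{real_vector,t2_space})"
  shows "continuous_on UNIV (\<lambda>x::'a. c *\<^sub>R x)" and "continuous_on UNIV (\<lambda>t. t *\<^sub>R (a::'a))"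
proof -
  have sc: "continuous_on UNIV (\<lambda>(t, x). t *\<^sub>R x :: 'a)"
    using assms by (simp add: locally_convex_tvs_def)
  from continuous_on_compose2[OF sc, of UNIV "\<lambda>x. (c, x)"]
  show "continuous_on UNIV (\<lambda>x::'a. c *\<^sub>R x)" by (simp add: continuous_on_Pair)
  from continuous_on_compose2[OF sc, of UNIV "\<lambda>t. (t, a)"]
  show "continuous_on UNIV (\<lambda>t. t *\<^sub>R (a::'a))" by (simp add: continuous_on_Pair)
qed

lemma lctvs_nhd_absorbing:
  assumes "locally_convex_tvs TYPE('a::{real_vector,t2_space})" "open W" "(0::'a) \<in> W"
  shows "\<exists>t>0. (1 / t) *\<^sub>R x \<in> W"
proof -
  have "open ((\<lambda>t. t *\<^sub>R x) -` W)" and "0 \<in> (\<lambda>t. t *\<^sub>R x) -` W"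
    using open_vimage[OF assms(2) lctvs_continuous_on_scaleR(2)[OF assms(1)]] assms(3) by auto
  then obtain e where "e > 0" "ball 0 e \<subseteq> (\<lambda>t. t *\<^sub>R x) -` W"
    using open_contains_ball by blast
  then have "(1 / (2 / e)) *\<^sub>R x \<in> W" by (auto simp: subset_iff dist_real_def)
  then show ?thesis using \<open>e > 0\<close> by (intro exI[of _ "2 / e"]) auto
qed

lemma lctvs_linear_continuous_if_bounded_on_nhd:
  fixes l :: "'a::{real_vector,t2_space} \<Rightarrow> real"
  assumes lc: "locally_convex_tvs TYPE('a)" and l: "linear l"
    and N: "open N" "0 \<in> N" and bnd: "\<And>w. w \<in> N \<Longrightarrow> \<bar>l w\<bar> \<le> M"
  shows "continuous_on UNIV l"
proof -
  have M: "M \<ge> 0" using bnd[OF N(2)] by simp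
  have "open (l -` B)" if B: "open B" for B
  proof (subst open_subopen, intro ballI)
    fix x0 assume "x0 \<in> l -` B"
    then obtain e where e: "e > 0" "ball (l x0) e \<subseteq> B"
      using B open_contains_ball by blast
    define c where "c = (M + 1) / e"
    have c: "c > 0" using M e by (simp add: c_def)
    define T where "T = (\<lambda>x. x + (- x0)) -` ((\<lambda>x. c *\<^sub>R x) -` N)"
    have "open T" unfolding T_def
      by (intro open_vimage lctvs_continuous_on_scaleR lctvs_continuous_on_plus_const lc N)
    moreover have "x0 \<in> T" using N(2) by (simp add: T_def)
    moreover have "T \<subseteq> l -` B"
    proof
      fix x assume "x \<in> T"
      then have "\<bar>l (c *\<^sub>R (x - x0))\<bar> \<le> M" by (intro bnd) (simp add: T_def)
      then have "c * \<bar>l x - l x0\<bar> \<le> M"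
        using c by (simp add: linear_scale[OF l] linear_diff[OF l] abs_mult)
      then have "\<bar>l x - l x0\<bar> \<le> M / c" using c by (simp add: field_simps)
      also have "M / c < e" using e M by (simp add: c_def field_simps)
      finally have "l x \<in> ball (l x0) e" by (simp add: dist_real_def abs_minus_commute)
      then show "x \<in> l -` B" using e by auto
    qed
    ultimately show "\<exists>T. open T \<and> x0 \<in> T \<and> T \<subseteq> l -` B" by blast
  qed
  then show ?thesis using continuous_on_open_vimage[of UNIV l] by auto
qed

section \<open>Sublinear functions in \<open>Gamma\<close> as support functions\<close>

lemma sublinear_efun_add: "sublinear_efun g \<Longrightarrow> g (x + y) \<le> g x + g y"
  by (simp add: sublinear_efun_def)

lemma sublinear_efun_scaleR: "sublinear_efun g \<Longrightarrow> t > 0 \<Longrightarrow> g (t *\<^sub>R x) = ereal t * g x"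
  by (simp add: sublinear_efun_def)

lemma Gamma_not_MInfty: "g \<in> Gamma \<Longrightarrow> g x \<noteq> -\<infinity>"
  by (simp add: Gamma_def proper_fun_def)

text \<open>Lower semicontinuity is needed here: it rules out \<open>g 0 = \<infinity>\<close>.\<close>

lemma Gamma_sublinear_efun_zero:
  fixes g :: "'a::{real_vector,t2_space} \<Rightarrow> ereal"
  assumes lc: "locally_convex_tvs TYPE('a)" and g: "g \<in> Gamma" "sublinear_efun g"
  shows "g 0 = 0"
proof -
  obtain x0 where "g x0 \<noteq> \<infinity>" using g(1) by (auto simp: Gamma_def proper_fun_def)
  then obtain c0 where c0: "g x0 = ereal c0" using Gamma_not_MInfty[OF g(1), of x0] by (cases "g x0") auto
  have closed: "closed {x. g x \<le> ereal \<bar>c0\<bar>}" using g(1) by (auto simp: Gamma_def lsc_fun_def)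
  have small: "g (t *\<^sub>R x0) \<le> ereal \<bar>c0\<bar>" if t: "0 < t" "t \<le> 1" for t
  proof -
    have "t * c0 \<le> t * \<bar>c0\<bar>" using t by (intro mult_left_mono) auto
    also have "\<dots> \<le> \<bar>c0\<bar>" using t by (intro mult_left_le_one_le) auto
    finally show ?thesis using sublinear_efun_scaleR[OF g(2) t(1)] c0 by simp
  qed
  have "inverse (real (Suc n)) *\<^sub>R x0 \<in> {x. g x \<le> ereal \<bar>c0\<bar>}" for n
    using small[of "inverse (real (Suc n))"] by (simp add: inverse_le_1_iff)
  moreover have "(\<lambda>n. inverse (real (Suc n)) *\<^sub>R x0) \<longlonglongrightarrow> 0 *\<^sub>R x0"
    by (rule continuous_on_tendsto_compose[OF lctvs_continuous_on_scaleR(2)[OF lc]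
          LIMSEQ_inverse_real_of_nat]) auto
  ultimately have "0 *\<^sub>R x0 \<in> {x. g x \<le> ereal \<bar>c0\<bar>}"
    by (rule closed_sequentially[OF closed])
  then obtain a where a: "g 0 = ereal a" using Gamma_not_MInfty[OF g(1)] by (cases "g 0") auto
  have "g 0 = ereal 2 * g 0" using sublinear_efun_scaleR[OF g(2), of 2 0] by simp
  then show ?thesis using a by (simp add: zero_ereal_def)
qed

text \<open>The infimal convolution of \<open>g\<close> with \<open>M\<close> times the Minkowski gauge of \<open>W\<close>.\<close>

definition inf_conv_gauge :: "('a::real_vector \<Rightarrow> ereal) \<Rightarrow> 'a set \<Rightarrow> real \<Rightarrow> 'a \<Rightarrow> real" where
  "inf_conv_gauge g W M w =
     Inf {c + M * s | u s c. 0 < s \<and> (1 / s) *\<^sub>R (w - u) \<in> W \<and> g u = ereal c}"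

context
  fixes g :: "'a::real_vector \<Rightarrow> ereal" and W :: "'a set" and M :: real
  assumes g: "sublinear_efun g" "\<And>x. g x \<noteq> -\<infinity>" "g 0 = 0"
    and W: "convex W" "0 \<in> W" "\<And>w. \<exists>t>0. (1 / t) *\<^sub>R w \<in> W"
    and g_gt_on_W: "\<And>w. w \<in> W \<Longrightarrow> ereal (-1) < g (- w)"
    and M: "M \<ge> 1"
begin

lemma inf_conv_gauge_value_gt:
  assumes b: "b > 0" "(1 / b) *\<^sub>R (- w) \<in> W"
    and s: "s > 0" "(1 / s) *\<^sub>R (w - u) \<in> W" and c: "g u = ereal c"
  shows "- (b + s) < c"
proof -
  define p where "p = (b / (b + s)) *\<^sub>R ((1 / b) *\<^sub>R (- w)) + (s / (b + s)) *\<^sub>R ((1 / s) *\<^sub>R (w - u))"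
  have "b / (b + s) + s / (b + s) = 1" using b s by (simp add: add_divide_distrib[symmetric])
  then have "p \<in> W" unfolding p_def using b s by (intro convexD[OF W(1)]) auto
  then have gp: "ereal (-1) < g (- p)" by (rule g_gt_on_W)
  have "u = (b + s) *\<^sub>R (- p)" using b s by (simp add: p_def algebra_simps)
  then have "g u = ereal (b + s) * g (- p)"
    using sublinear_efun_scaleR[OF g(1), of "b + s" "- p"] b s by simp
  with gp c g(2)[of "- p"] b s obtain cp where "cp > -1" "c = (b + s) * cp"
    by (cases "g (- p)") auto
  moreover have "(b + s) * cp > (b + s) * (-1)" if "cp > -1"
    using that b s by (intro mult_strict_left_mono) auto
  ultimately show ?thesis by simp
qed

lemma inf_conv_gauge_le:
  assumes "0 < s" "(1 / s) *\<^sub>R (w - u) \<in> W" "g u = ereal c"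
  shows "inf_conv_gauge g W M w \<le> c + M * s"
  unfolding inf_conv_gauge_def
proof (rule cInf_lower)
  show "c + M * s \<in> {c + M * s | u s c. 0 < s \<and> (1 / s) *\<^sub>R (w - u) \<in> W \<and> g u = ereal c}"
    using assms by blast
  obtain b where b: "b > 0" "(1 / b) *\<^sub>R (- w) \<in> W" using W(3) by blast
  show "bdd_below {c + M * s | u s c. 0 < s \<and> (1 / s) *\<^sub>R (w - u) \<in> W \<and> g u = ereal c}"
  proof (rule bdd_belowI[of _ "- b"], clarify)
    fix u s c assume us: "0 < s" "(1 / s) *\<^sub>R (w - u) \<in> W" "g u = ereal c"
    have "- (b + s) < c" using inf_conv_gauge_value_gt[OF b us] .
    moreover have "s \<le> M * s" using M us(1) by simp
    ultimately show "- b \<le> c + M * s" by linarith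
  qed
qed

lemma inf_conv_gauge_greatest:
  assumes "\<And>u s c. 0 < s \<Longrightarrow> (1 / s) *\<^sub>R (w - u) \<in> W \<Longrightarrow> g u = ereal c \<Longrightarrow> d \<le> c + M * s"
  shows "d \<le> inf_conv_gauge g W M w"
  unfolding inf_conv_gauge_def
proof (rule cInf_greatest)
  obtain t where "t > 0" "(1 / t) *\<^sub>R (w - 0) \<in> W" using W(3) by auto
  moreover have "g 0 = ereal 0" using g(3) by (simp add: zero_ereal_def)
  ultimately have "0 + M * t \<in> {c + M * s | u s c. 0 < s \<and> (1 / s) *\<^sub>R (w - u) \<in> W \<and> g u = ereal c}"
    by blast
  then show "{c + M * s | u s c. 0 < s \<and> (1 / s) *\<^sub>R (w - u) \<in> W \<and> g u = ereal c} \<noteq> {}"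
    by blast
qed (use assms in blast)

lemma sublinear_inf_conv_gauge: "sublinear (inf_conv_gauge g W M)"
  unfolding sublinear_def
proof (intro conjI allI impI)
  fix x y
  have sum: "inf_conv_gauge g W M (x + y) \<le> (c1 + M * s1) + (c2 + M * s2)"
    if 1: "0 < s1" "(1 / s1) *\<^sub>R (x - u1) \<in> W" "g u1 = ereal c1"
      and 2: "0 < s2" "(1 / s2) *\<^sub>R (y - u2) \<in> W" "g u2 = ereal c2" for u1 s1 c1 u2 s2 c2
  proof -
    have "g (u1 + u2) \<le> ereal (c1 + c2)" using sublinear_efun_add[OF g(1), of u1 u2] 1 2 by simp
    then obtain c where c: "g (u1 + u2) = ereal c" "c \<le> c1 + c2"
      using g(2)[of "u1 + u2"] by (cases "g (u1 + u2)") auto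
    have "(s1 / (s1 + s2)) *\<^sub>R ((1 / s1) *\<^sub>R (x - u1)) + (s2 / (s1 + s2)) *\<^sub>R ((1 / s2) *\<^sub>R (y - u2)) \<in> W"
      using 1 2 by (intro convexD[OF W(1)]) (auto simp: add_divide_distrib[symmetric])
    also have "(s1 / (s1 + s2)) *\<^sub>R ((1 / s1) *\<^sub>R (x - u1)) + (s2 / (s1 + s2)) *\<^sub>R ((1 / s2) *\<^sub>R (y - u2))
        = (1 / (s1 + s2)) *\<^sub>R ((x + y) - (u1 + u2))"
      using 1 2 by (simp add: algebra_simps)
    finally have "inf_conv_gauge g W M (x + y) \<le> c + M * (s1 + s2)"
      using 1 2 c by (intro inf_conv_gauge_le) auto
    then show ?thesis using c by (simp add: algebra_simps)
  qed
  have "inf_conv_gauge g W M (x + y) - inf_conv_gauge g W M y \<le> inf_conv_gauge g W M x"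
  proof (rule inf_conv_gauge_greatest)
    fix u1 s1 c1 assume 1: "0 < s1" "(1 / s1) *\<^sub>R (x - u1) \<in> W" "g u1 = ereal c1"
    have "inf_conv_gauge g W M (x + y) - (c1 + M * s1) \<le> inf_conv_gauge g W M y"
      using sum[OF 1] by (intro inf_conv_gauge_greatest) force
    then show "inf_conv_gauge g W M (x + y) - inf_conv_gauge g W M y \<le> c1 + M * s1" by simp
  qed
  then show "inf_conv_gauge g W M (x + y) \<le> inf_conv_gauge g W M x + inf_conv_gauge g W M y"
    by simp
next
  fix t :: real and x assume t: "t > 0"
  have scaled: "inf_conv_gauge g W M (t *\<^sub>R w) \<le> t * (c + M * s)"
    if "0 < s" "(1 / s) *\<^sub>R (w - u) \<in> W" "g u = ereal c" "t > 0" for w u s c t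
  proof -
    have "(1 / (t * s)) *\<^sub>R (t *\<^sub>R w - t *\<^sub>R u) = (1 / s) *\<^sub>R (w - u)"
      using that by (simp add: scaleR_diff_right[symmetric])
    moreover have "g (t *\<^sub>R u) = ereal (t * c)" using sublinear_efun_scaleR[OF g(1)] that by simp
    ultimately have "inf_conv_gauge g W M (t *\<^sub>R w) \<le> t * c + M * (t * s)"
      using that by (intro inf_conv_gauge_le) auto
    then show ?thesis by (simp add: algebra_simps)
  qed
  have "inf_conv_gauge g W M (t *\<^sub>R x) / t \<le> inf_conv_gauge g W M x"
  proof (rule inf_conv_gauge_greatest)
    fix u s c assume "0 < s" "(1 / s) *\<^sub>R (x - u) \<in> W" "g u = ereal c"
    from scaled[OF this t] show "inf_conv_gauge g W M (t *\<^sub>R x) / t \<le> c + M * s"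
      by (simp add: pos_divide_le_eq[OF t] mult.commute)
  qed
  moreover have "inf_conv_gauge g W M x * t \<le> inf_conv_gauge g W M (t *\<^sub>R x)"
  proof (rule inf_conv_gauge_greatest)
    fix u s c assume "0 < s" "(1 / s) *\<^sub>R (t *\<^sub>R x - u) \<in> W" "g u = ereal c"
    from scaled[OF this, of "1 / t"] t show "inf_conv_gauge g W M x * t \<le> c + M * s"
      by (simp add: field_simps)
  qed
  ultimately show "inf_conv_gauge g W M (t *\<^sub>R x) = t * inf_conv_gauge g W M x"
    using t by (simp add: field_simps)
qed

lemma inf_conv_gauge_le_fun: "g w = ereal c \<Longrightarrow> inf_conv_gauge g W M w \<le> c"
proof (rule field_le_epsilon)
  fix e :: real assume "g w = ereal c" "e > 0"
  then have "inf_conv_gauge g W M w \<le> c + M * (e / M)"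
    using M W(2) by (intro inf_conv_gauge_le) auto
  then show "inf_conv_gauge g W M w \<le> c + e" using M by simp
qed

lemma inf_conv_gauge_le_bound: "w \<in> W \<Longrightarrow> inf_conv_gauge g W M w \<le> M"
  using inf_conv_gauge_le[of 1 w 0 0] g(3) by (simp add: zero_ereal_def)

lemma inf_conv_gauge_ge:
  assumes gt: "\<And>v. v \<in> W \<Longrightarrow> ereal r < g (z - v)"
    and a: "a > 0" "(1 / a) *\<^sub>R (- z) \<in> W" and M_ge: "M \<ge> \<bar>r\<bar> + a + 1"
  shows "r \<le> inf_conv_gauge g W M z"
proof (rule inf_conv_gauge_greatest)
  fix u s c assume us: "0 < s" "(1 / s) *\<^sub>R (z - u) \<in> W" "g u = ereal c"
  show "r \<le> c + M * s"
  proof (cases "s < 1")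
    case True
    \<comment> \<open>\<open>W\<close> is star-shaped about \<open>0\<close>, so \<open>z - u = s *\<^sub>R ((1 / s) *\<^sub>R (z - u)) \<in> W\<close>\<close>
    have "s *\<^sub>R ((1 / s) *\<^sub>R (z - u)) + (1 - s) *\<^sub>R 0 \<in> W"
      using us True by (intro convexD[OF W(1) _ W(2)]) auto
    then have "ereal r < g u" using gt[of "z - u"] us by simp
    then show ?thesis using us M by (simp add: add_increasing2)
  next
    case False
    have "(M - 1) * 1 \<le> (M - 1) * s" using False M by (intro mult_left_mono) auto
    then show ?thesis
      using inf_conv_gauge_value_gt[OF a us] M_ge by (simp add: algebra_simps)
  qed
qed

end

theorem subdiff0_exceeds:
  fixes g :: "'a::{real_vector,t2_space} \<Rightarrow> ereal"
  assumes lc: "locally_convex_tvs TYPE('a)" and g: "g \<in> Gamma" "sublinear_efun g"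
    and gz: "ereal r < g z"
  shows "\<exists>y\<in>subdiff0 g. r < y z"
proof -
  have g0: "g 0 = 0" using Gamma_sublinear_efun_zero[OF lc g] .
  obtain r' where r': "r < r'" "ereal r' < g z" using ereal_dense2[OF gz] by auto
  \<comment> \<open>\<open>w \<in> U \<longleftrightarrow> g (- w) > -1 \<and> g (z - w) > r'\<close>\<close>
  define U where "U = uminus -` (- {x. g x \<le> ereal (-1)} \<inter> (\<lambda>x. x + z) -` (- {x. g x \<le> ereal r'}))"
  have "closed {x. g x \<le> ereal c}" for c using g(1) by (simp add: Gamma_def lsc_fun_def)
  then have "open U"
    unfolding U_def using lctvs_continuous_on_scaleR(1)[OF lc, of "-1"]
    by (intro open_vimage open_Int lctvs_continuous_on_plus_const lc) (auto simp: open_Compl)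
  moreover have "0 \<in> U" using g0 r' by (simp add: U_def)
  ultimately obtain W where W: "open W" "convex W" "0 \<in> W" "W \<subseteq> U"
    using lc unfolding locally_convex_tvs_def by meson
  have absorbing: "\<exists>t>0. (1 / t) *\<^sub>R w \<in> W" for w using lctvs_nhd_absorbing[OF lc W(1,3)] .
  then obtain a where a: "a > 0" "(1 / a) *\<^sub>R (- z) \<in> W" by blast
  define M where "M = \<bar>r'\<bar> + a + 1"
  define q where "q = inf_conv_gauge g W M"
  note q_props = sublinear_inf_conv_gauge inf_conv_gauge_le_fun inf_conv_gauge_le_bound
    inf_conv_gauge_ge[where r = r' and z = z and a = a]
  have hyps: "sublinear_efun g" "\<And>x. g x \<noteq> -\<infinity>" "g 0 = 0" "convex W" "0 \<in> W"
    "\<And>w. \<exists>t>0. (1 / t) *\<^sub>R w \<in> W" "\<And>w. w \<in> W \<Longrightarrow> ereal (-1) < g (- w)" "M \<ge> 1"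
    using g(2) Gamma_not_MInfty[OF g(1)] g0 W absorbing a by (auto simp: U_def M_def)
  obtain l where l: "linear l" "\<And>x. l x \<le> q x" "l z = q z"
    using sublinear_linear_minorant_at[OF q_props(1)[OF hyps]] unfolding q_def by blast
  have "r' \<le> q z"
    unfolding q_def using W(4) a by (intro q_props(4)[OF hyps]) (auto simp: U_def M_def)
  then have "r < l z" using l(3) r' by simp
  moreover have "continuous_on UNIV l"
  proof (rule lctvs_linear_continuous_if_bounded_on_nhd[OF lc l(1), of "W \<inter> uminus -` W" M])
    show "open (W \<inter> uminus -` W)"
      using W lctvs_continuous_on_scaleR(1)[OF lc, of "-1"] by (auto intro: open_vimage)
    show "0 \<in> W \<inter> uminus -` W" using W by simp
    fix w assume "w \<in> W \<inter> uminus -` W"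
    then have "l w \<le> M" "l (- w) \<le> M"
      using l(2) q_props(3)[OF hyps] unfolding q_def by (auto intro: order.trans)
    then show "\<bar>l w\<bar> \<le> M" using linear_neg[OF l(1), of w] by simp
  qed
  moreover have "ereal (l x) \<le> g x" for x
  proof (cases "g x")
    case (real c)
    then show ?thesis using l(2)[of x] q_props(2)[OF hyps, of x c] by (simp add: q_def)
  qed (use Gamma_not_MInfty[OF g(1)] in auto)
  ultimately show ?thesis using l(1) by (auto simp: subdiff0_def topdual_def)
qed

corollary le_iff_subdiff0:
  fixes g :: "'a::{real_vector,t2_space} \<Rightarrow> ereal"
  assumes "locally_convex_tvs TYPE('a)" "g \<in> Gamma" "sublinear_efun g"
  shows "g z \<le> ereal r \<longleftrightarrow> (\<forall>y\<in>subdiff0 g. y z \<le> r)"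
proof
  show "\<forall>y\<in>subdiff0 g. y z \<le> r" if "g z \<le> ereal r"
  proof
    fix y assume "y \<in> subdiff0 g"
    then have "ereal (y z) \<le> g z" by (simp add: subdiff0_def)
    then have "ereal (y z) \<le> ereal r" using that by (rule order.trans)
    then show "y z \<le> r" by simp
  qed
  show "g z \<le> ereal r" if "\<forall>y\<in>subdiff0 g. y z \<le> r"
    using subdiff0_exceeds[OF assms, of r z] that by (meson linorder_not_le)
qed

section \<open>Separation from convex cones in the product topology\<close>

lemma nonpos_if_small_quadratic_bound:
  fixes X Y :: real
  assumes "\<And>s. 0 < s \<Longrightarrow> s < 1 \<Longrightarrow> 2 * s * X \<le> s\<^sup>2 * Y"
  shows "X \<le> 0"
proof (rule ccontr)
  assume X: "\<not> X \<le> 0"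
  define s where "s = min (1/2) (X / (\<bar>Y\<bar> + 1))"
  have s: "0 < s" "s < 1" using X by (auto simp: s_def)
  have "2 * s * X \<le> s\<^sup>2 * Y" using assms s by blast
  then have "2 * X \<le> s * Y" using s by (simp add: power2_eq_square mult.assoc)
  also have "s * Y \<le> s * \<bar>Y\<bar>" using s by (intro mult_left_mono) auto
  also have "s * \<bar>Y\<bar> \<le> (X / (\<bar>Y\<bar> + 1)) * \<bar>Y\<bar>" unfolding s_def by (intro mult_right_mono) auto
  also have "\<dots> \<le> X" using X by (simp add: field_simps)
  finally show False using X by simp
qed

lemma finite_support_nearest_point:
  fixes Q :: "('a \<Rightarrow> real) set" and p :: "'a \<Rightarrow> real"
  assumes F: "finite F" and Q: "closed Q" "u \<in> Q" and QZ: "\<And>f x. f \<in> Q \<Longrightarrow> x \<notin> F \<Longrightarrow> f x = 0"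
  shows "\<exists>q\<in>Q. \<forall>f\<in>Q. (\<Sum>x\<in>F. (q x - p x)\<^sup>2) \<le> (\<Sum>x\<in>F. (f x - p x)\<^sup>2)"
proof -
  define \<phi> where "\<phi> f = (\<Sum>x\<in>F. (f x - p x)\<^sup>2)" for f :: "'a \<Rightarrow> real"
  have cont: "continuous_on UNIV \<phi>" unfolding \<phi>_def
    by (intro continuous_on_sum continuous_on_power continuous_on_diff
        continuous_on_product_coordinates continuous_on_const)
  define \<rho> where "\<rho> = sqrt (\<phi> u)"
  define B where "B = Pi UNIV (\<lambda>x. if x \<in> F then {p x - \<rho> .. p x + \<rho>} else {0::real})"
  have "compactin (product_topology (\<lambda>_. euclidean) UNIV)
      (PiE UNIV (\<lambda>x. if x \<in> F then {p x - \<rho> .. p x + \<rho>} else {0::real}))"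
    by (subst compactin_PiE) auto
  then have "compact B" unfolding B_def PiE_UNIV_domain euclidean_product_topology by simp
  \<comment> \<open>only the compact box \<open>B\<close> around \<open>p\<close> matters for the minimum\<close>
  have inB: "f \<in> B" if "f \<in> Q" "\<phi> f \<le> \<phi> u" for f
  proof -
    have "\<bar>f x - p x\<bar> \<le> \<rho>" if "x \<in> F" for x
    proof -
      have "(f x - p x)\<^sup>2 \<le> \<phi> f" unfolding \<phi>_def by (rule member_le_sum) (use F that in auto)
      then have "\<bar>f x - p x\<bar>\<^sup>2 \<le> \<phi> u" using \<open>\<phi> f \<le> \<phi> u\<close> by simp
      then show ?thesis unfolding \<rho>_def by (rule real_le_rsqrt)
    qed
    then show ?thesis using QZ[OF that(1)] unfolding B_def by (force simp: abs_le_iff)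
  qed
  have "compact (Q \<inter> B)" using \<open>compact B\<close> Q(1) by (simp add: compact_Int_closed inf_commute)
  moreover have "u \<in> Q \<inter> B" using Q(2) inB by simp
  ultimately obtain q where q: "q \<in> Q \<inter> B" "\<And>f. f \<in> Q \<inter> B \<Longrightarrow> \<phi> q \<le> \<phi> f"
    using continuous_attains_inf[of "Q \<inter> B" \<phi>] continuous_on_subset[OF cont] by blast
  have "\<phi> q \<le> \<phi> f" if "f \<in> Q" for f
    using q inB[OF that] q(2)[OF \<open>u \<in> Q \<inter> B\<close>] that by force
  then show ?thesis using q(1) unfolding \<phi>_def by blast
qed

lemma continuous_on_fun_scale: "continuous_on UNIV (\<lambda>(f::'a \<Rightarrow> real) x. c * f x)"
  by (rule continuous_on_coordinatewise_then_product)
    (intro continuous_on_mult continuous_on_const continuous_on_product_coordinates)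

lemma continuous_on_fun_plus: "continuous_on UNIV (\<lambda>(f::'a \<Rightarrow> real) x. f x + d x)"
  by (rule continuous_on_coordinatewise_then_product)
    (intro continuous_on_add continuous_on_const continuous_on_product_coordinates)

text \<open>The separating functional is \<open>p - q\<close> for the point \<open>q\<close> of the closed cone nearest to \<open>p\<close>.\<close>

lemma finite_support_cone_separation:
  fixes D :: "('a \<Rightarrow> real) set" and p :: "'a \<Rightarrow> real"
  assumes F: "finite F" and DZ: "\<And>f x. f \<in> D \<Longrightarrow> x \<notin> F \<Longrightarrow> f x = 0"
    and D0: "(\<lambda>x. 0) \<in> D"
    and D_scale: "\<And>f c. f \<in> D \<Longrightarrow> c \<ge> 0 \<Longrightarrow> (\<lambda>x. c * f x) \<in> D"
    and D_add: "\<And>f h. f \<in> D \<Longrightarrow> h \<in> D \<Longrightarrow> (\<lambda>x. f x + h x) \<in> D"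
    and p: "p \<notin> closure D" "\<And>x. x \<notin> F \<Longrightarrow> p x = 0"
  shows "\<exists>a. (\<forall>f\<in>D. (\<Sum>x\<in>F. a x * f x) \<le> 0) \<and> (\<Sum>x\<in>F. a x * p x) > 0"
proof -
  have "closure D \<subseteq> (\<Inter>x\<in>-F. {f. f x = 0})"
    using DZ by (intro closure_minimal closed_INT ballI closed_Collect_eq
        continuous_on_product_coordinates continuous_on_const) auto
  then have QZ: "f x = 0" if "f \<in> closure D" "x \<notin> F" for f x using that by blast
  have Q_scale: "(\<lambda>x. c * f x) \<in> closure D" if "f \<in> closure D" "c \<ge> 0" for f c
    using image_closure_subset[OF continuous_on_subset[OF continuous_on_fun_scale] closed_closure,
        of D c] D_scale[OF _ that(2)] closure_subset[of D] that(1) by blast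
  have Q_add: "(\<lambda>x. f x + d x) \<in> closure D" if "f \<in> closure D" "d \<in> D" for f d
    using image_closure_subset[OF continuous_on_subset[OF continuous_on_fun_plus] closed_closure,
        of D d] D_add[OF _ that(2)] closure_subset[of D] that(1) by blast
  define \<phi> where "\<phi> f = (\<Sum>x\<in>F. (f x - p x)\<^sup>2)" for f :: "'a \<Rightarrow> real"
  have "\<exists>q\<in>closure D. \<forall>f\<in>closure D. \<phi> q \<le> \<phi> f"
    unfolding \<phi>_def by (rule finite_support_nearest_point[where u = "\<lambda>x. 0"])
      (use F D0 QZ closure_subset in auto)
  then obtain q where q: "q \<in> closure D" and q_min: "\<And>f. f \<in> closure D \<Longrightarrow> \<phi> q \<le> \<phi> f"
    by blast
  define a where "a x = p x - q x" for x
  \<comment> \<open>first-order optimality of \<open>q\<close> along every admissible direction \<open>h\<close>\<close>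
  have var: "(\<Sum>x\<in>F. a x * h x) \<le> 0"
    if "\<And>s. 0 < s \<Longrightarrow> s < 1 \<Longrightarrow> (\<lambda>x. q x + s * h x) \<in> closure D" for h
  proof (rule nonpos_if_small_quadratic_bound)
    fix s :: real assume s: "0 < s" "s < 1"
    have "(q x + s * h x - p x)\<^sup>2 = (q x - p x)\<^sup>2 - 2 * s * (a x * h x) + s\<^sup>2 * (h x)\<^sup>2" for x
      by (simp add: a_def power2_eq_square algebra_simps)
    then have "\<phi> (\<lambda>x. q x + s * h x) = \<phi> q - 2 * s * (\<Sum>x\<in>F. a x * h x) + s\<^sup>2 * (\<Sum>x\<in>F. (h x)\<^sup>2)"
      unfolding \<phi>_def by (simp add: sum.distrib sum_subtractf sum_distrib_left)
    moreover have "\<phi> q \<le> \<phi> (\<lambda>x. q x + s * h x)" using q_min that s by blast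
    ultimately show "2 * s * (\<Sum>x\<in>F. a x * h x) \<le> s\<^sup>2 * (\<Sum>x\<in>F. (h x)\<^sup>2)" by simp
  qed
  have aD: "(\<Sum>x\<in>F. a x * f x) \<le> 0" if "f \<in> D" for f
    using Q_add[OF q D_scale[OF that]] by (intro var) simp
  have aq: "(\<Sum>x\<in>F. a x * (- q x)) \<le> 0"
  proof (rule var)
    fix s :: real assume "0 < s" "s < 1"
    then have "(\<lambda>x. (1 - s) * q x) \<in> closure D" using Q_scale q by auto
    then show "(\<lambda>x. q x + s * (- q x)) \<in> closure D" by (simp add: algebra_simps)
  qed
  have "\<phi> q \<noteq> 0"
  proof
    assume "\<phi> q = 0"
    then have "\<forall>x\<in>F. (q x - p x)\<^sup>2 = 0" unfolding \<phi>_def using F by (subst (asm) sum_nonneg_eq_0_iff) auto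
    then have "q = p" using QZ[OF q] p(2) by (auto simp: fun_eq_iff)
    then show False using q p(1) by simp
  qed
  moreover have "\<phi> q \<ge> 0" unfolding \<phi>_def by (intro sum_nonneg) auto
  ultimately have "\<phi> q > 0" by linarith
  have "(\<Sum>x\<in>F. a x * p x) = (\<Sum>x\<in>F. a x * a x) + (\<Sum>x\<in>F. a x * q x)"
    by (simp add: a_def sum.distrib[symmetric] algebra_simps)
  also have "(\<Sum>x\<in>F. a x * a x) = \<phi> q" unfolding \<phi>_def a_def
    by (intro sum.cong) (auto simp: power2_eq_square algebra_simps)
  finally have "(\<Sum>x\<in>F. a x * p x) > 0" using aq \<open>\<phi> q > 0\<close> by (simp add: sum_negf)
  then show ?thesis using aD by blast
qed

text \<open>Basic open sets of the product topology constrain finitely many coordinates only.\<close>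

lemma finite_restriction_not_in_closure:
  fixes K :: "('a \<Rightarrow> real) set"
  assumes "k \<notin> closure K"
  shows "\<exists>F. finite F \<and>
    (\<lambda>x. if x \<in> F then k x else 0) \<notin> closure ((\<lambda>f x. if x \<in> F then f x else 0) ` K)"
proof -
  have "open (- closure K)" by (simp add: open_Compl)
  then have "openin (product_topology (\<lambda>i. euclidean) UNIV) (- closure K)"
    by (simp add: open_fun_def)
  moreover have "k \<in> - closure K" using assms by simp
  ultimately have "\<exists>X. k \<in> PiE UNIV X \<and> (\<forall>i. openin euclidean (X i))
      \<and> finite {i. X i \<noteq> topspace euclidean} \<and> PiE UNIV X \<subseteq> - closure K"
    by (rule product_topology_open_contains_basis)
  then obtain X
    where X: "k \<in> PiE UNIV X" "\<forall>i. openin euclidean (X i)" "finite {i. X i \<noteq> topspace euclidean}"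
      "PiE UNIV X \<subseteq> - closure K"
    by (elim exE conjE)
  define F where "F = {i. X i \<noteq> UNIV}"
  define R :: "('a \<Rightarrow> real) \<Rightarrow> 'a \<Rightarrow> real" where "R = (\<lambda>f x. if x \<in> F then f x else 0)"
  define V where "V = (\<Inter>x\<in>F. (\<lambda>f. f x) -` X x)"
  have "finite F" using X(3) by (simp add: F_def)
  have "open (X x)" for x using X(2) by simp
  then have "open ((\<lambda>f. f x) -` X x)" for x
    by (rule open_vimage[OF _ continuous_on_product_coordinates])
  then have "open V" unfolding V_def using \<open>finite F\<close> by (intro open_INT) auto
  have "R k \<in> V" using X(1) by (auto simp: V_def R_def)
  have "R j \<notin> V" if "j \<in> K" for j
  proof
    assume "R j \<in> V"
    then have "j i \<in> X i" for i by (cases "i \<in> F") (auto simp: V_def R_def F_def)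
    then have "j \<in> PiE UNIV X" by (simp add: PiE_UNIV_domain)
    then show False using X(4) that closure_subset[of K] by blast
  qed
  then have "V \<inter> closure (R ` K) = {}" using open_Int_closure_eq_empty[OF \<open>open V\<close>] by blast
  with \<open>R k \<in> V\<close> have "R k \<notin> closure (R ` K)" by blast
  with \<open>finite F\<close> show ?thesis unfolding R_def by auto
qed

lemma cone_separation_finite_coordinates:
  fixes K :: "('a \<Rightarrow> real) set"
  assumes K0: "(\<lambda>x. 0) \<in> K"
    and K_scale: "\<And>f c. f \<in> K \<Longrightarrow> c \<ge> 0 \<Longrightarrow> (\<lambda>x. c * f x) \<in> K"
    and K_add: "\<And>f h. f \<in> K \<Longrightarrow> h \<in> K \<Longrightarrow> (\<lambda>x. f x + h x) \<in> K"
    and k: "k \<notin> closure K"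
  shows "\<exists>F a. finite F \<and> (\<forall>f\<in>K. (\<Sum>x\<in>F. a x * f x) \<le> 0) \<and> (\<Sum>x\<in>F. a x * k x) > 0"
proof -
  obtain F where F: "finite F"
    and sep: "(\<lambda>x. if x \<in> F then k x else 0) \<notin> closure ((\<lambda>f x. if x \<in> F then f x else 0) ` K)"
    using finite_restriction_not_in_closure[OF k] by blast
  define R :: "('a \<Rightarrow> real) \<Rightarrow> 'a \<Rightarrow> real" where "R = (\<lambda>f x. if x \<in> F then f x else 0)"
  have "R (\<lambda>x. 0) \<in> R ` K" using K0 by (rule imageI)
  then have D0: "(\<lambda>x. 0) \<in> R ` K" by (simp add: R_def)
  have D_scale: "(\<lambda>x. c * f x) \<in> R ` K" if "f \<in> R ` K" "c \<ge> 0" for f c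
  proof -
    from that(1) obtain j where j: "j \<in> K" "f = R j" by blast
    have "(\<lambda>x. c * R j x) = R (\<lambda>x. c * j x)" by (auto simp: R_def)
    then show ?thesis unfolding j(2) using K_scale[OF j(1) that(2)] by simp
  qed
  have D_add: "(\<lambda>x. f x + h x) \<in> R ` K" if "f \<in> R ` K" "h \<in> R ` K" for f h
  proof -
    from that obtain j1 j2 where j: "j1 \<in> K" "j2 \<in> K" "f = R j1" "h = R j2" by blast
    have "(\<lambda>x. R j1 x + R j2 x) = R (\<lambda>x. j1 x + j2 x)" by (auto simp: R_def)
    then show ?thesis unfolding j(3,4) using K_add[OF j(1,2)] by simp
  qed
  have "\<exists>a. (\<forall>f\<in>R ` K. (\<Sum>x\<in>F. a x * f x) \<le> 0) \<and> (\<Sum>x\<in>F. a x * R k x) > 0"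
    using D0 D_scale D_add sep by (intro finite_support_cone_separation[OF F]) (auto simp: R_def)
  then obtain a where a: "\<forall>f\<in>R ` K. (\<Sum>x\<in>F. a x * f x) \<le> 0" "(\<Sum>x\<in>F. a x * R k x) > 0"
    by blast
  have R_sum: "(\<Sum>x\<in>F. a x * R f x) = (\<Sum>x\<in>F. a x * f x)" for f
    by (intro sum.cong) (auto simp: R_def)
  show ?thesis using F a by (intro exI[of _ F] exI[of _ a]) (simp add: R_sum)
qed

section \<open>The cone generated by \<open>subdiff0 g - xs\<close> and its weak-star closure\<close>

lemma linear_if_topdual: "f \<in> topdual \<Longrightarrow> linear f"
  by (simp add: topdual_def)

lemma topdual_lincomb:
  assumes "f \<in> topdual" "h \<in> topdual"
  shows "(\<lambda>x. a * f x + b * h x) \<in> topdual"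
proof -
  have lf: "linear f" and lh: "linear h" using assms by (auto simp: topdual_def)
  have "linear (\<lambda>x. a * f x + b * h x)"
    by (rule linearI) (simp_all add: linear_add[OF lf] linear_add[OF lh]
        linear_scale[OF lf] linear_scale[OF lh] algebra_simps)
  moreover have "continuous_on UNIV (\<lambda>x. a * f x + b * h x)"
    using assms by (intro continuous_intros) (auto simp: topdual_def)
  ultimately show ?thesis by (simp add: topdual_def)
qed

lemma zero_in_topdual: "(\<lambda>x. 0) \<in> topdual"
  by (simp add: topdual_def linear_zero continuous_on_const)

lemma subdiff0_convex_comb:
  assumes "y1 \<in> subdiff0 g" "y2 \<in> subdiff0 g" "0 \<le> u" "u \<le> 1"
  shows "(\<lambda>x. u * y1 x + (1 - u) * y2 x) \<in> subdiff0 g"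
proof -
  have "ereal (u * y1 x + (1 - u) * y2 x) \<le> g x" for x
  proof (cases "g x")
    case (real c)
    have "y1 x \<le> c" "y2 x \<le> c" using assms(1,2) real by (auto simp: subdiff0_def dest!: spec[of _ x])
    then have "u * y1 x + (1 - u) * y2 x \<le> c" using assms(3,4) by (intro convex_bound_le) auto
    then show ?thesis using real by simp
  next
    case MInf
    then show ?thesis using assms(1) by (auto simp: subdiff0_def dest!: spec[of _ x])
  qed simp
  then show ?thesis using assms by (auto simp: subdiff0_def intro: topdual_lincomb)
qed

definition cone_diff :: "('a \<Rightarrow> real) set \<Rightarrow> ('a \<Rightarrow> real) \<Rightarrow> ('a \<Rightarrow> real) set" where
  "cone_diff B b = {(\<lambda>x. t * (y x - b x)) | t y. t \<ge> 0 \<and> y \<in> B}"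

lemma qri_eq_cone_diff: "qri B = {b \<in> B. fun_subspace (wstar_closure (cone_diff B b))}"
  by (simp add: qri_def cone_diff_def)

lemma cone_diff_zero: "y \<in> B \<Longrightarrow> (\<lambda>x. 0) \<in> cone_diff B b"
  unfolding cone_diff_def by (rule CollectI, rule exI[of _ 0]) auto

lemma cone_diff_scale:
  assumes "f \<in> cone_diff B b" "c \<ge> 0"
  shows "(\<lambda>x. c * f x) \<in> cone_diff B b"
proof -
  obtain t y where "t \<ge> 0" "y \<in> B" "f = (\<lambda>x. t * (y x - b x))"
    using assms(1) by (auto simp: cone_diff_def)
  then have "(\<lambda>x. c * f x) = (\<lambda>x. (c * t) * (y x - b x)) \<and> c * t \<ge> 0 \<and> y \<in> B"
    using assms(2) by (simp add: mult.assoc)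
  then show ?thesis unfolding cone_diff_def by blast
qed

lemma cone_diff_add:
  assumes convex: "\<And>y1 y2 u. y1 \<in> B \<Longrightarrow> y2 \<in> B \<Longrightarrow> 0 \<le> u \<Longrightarrow> u \<le> 1
      \<Longrightarrow> (\<lambda>x. u * y1 x + (1 - u) * y2 x) \<in> B"
    and f: "f \<in> cone_diff B b" and h: "h \<in> cone_diff B b"
  shows "(\<lambda>x. f x + h x) \<in> cone_diff B b"
proof -
  obtain t1 y1 where 1: "t1 \<ge> 0" "y1 \<in> B" "f = (\<lambda>x. t1 * (y1 x - b x))"
    using f by (auto simp: cone_diff_def)
  obtain t2 y2 where 2: "t2 \<ge> 0" "y2 \<in> B" "h = (\<lambda>x. t2 * (y2 x - b x))"
    using h by (auto simp: cone_diff_def)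
  show ?thesis
  proof (cases "t1 + t2 = 0")
    case True
    then have "t1 = 0" "t2 = 0" using 1 2 by auto
    then show ?thesis using 1 2 cone_diff_zero[OF 1(2)] by simp
  next
    case False
    then have t: "t1 + t2 > 0" using 1 2 by simp
    define u where "u = t1 / (t1 + t2)"
    have "(\<lambda>x. u * y1 x + (1 - u) * y2 x) \<in> B"
      using 1 2 t by (intro convex) (auto simp: u_def)
    moreover have "f x + h x = (t1 + t2) * ((u * y1 x + (1 - u) * y2 x) - b x)" for x
    proof -
      have weights: "(t1 + t2) * u = t1" "(t1 + t2) * (1 - u) = t2"
        using t by (simp_all add: u_def field_simps)
      have "(t1 + t2) * ((u * y1 x + (1 - u) * y2 x) - b x)
          = ((t1 + t2) * u) * y1 x + ((t1 + t2) * (1 - u)) * y2 x - (t1 + t2) * b x"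
        by (simp add: algebra_simps)
      also have "\<dots> = t1 * y1 x + t2 * y2 x - (t1 + t2) * b x" by (simp only: weights)
      finally show ?thesis using 1 2 by (simp add: algebra_simps)
    qed
    ultimately show ?thesis using t by (force simp: cone_diff_def)
  qed
qed

lemma wstar_closure_cone_diff_subdiff0_subset:
  "wstar_closure (cone_diff (subdiff0 g) xs) \<subseteq> {k \<in> topdual. \<forall>v\<in>le_set g xs. k v \<le> 0}"
proof (intro subsetI CollectI conjI ballI)
  fix k v assume k: "k \<in> wstar_closure (cone_diff (subdiff0 g) xs)" and v: "v \<in> le_set g xs"
  have "cone_diff (subdiff0 g) xs \<subseteq> {f. f v \<le> 0}"
  proof (clarsimp simp: cone_diff_def)
    fix t :: real and y assume "0 \<le> t" "y \<in> subdiff0 g"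
    then have "ereal (y v) \<le> ereal (xs v)"
      using v order.trans by (fastforce simp: subdiff0_def le_set_def)
    then show "t * (y v - xs v) \<le> 0" using \<open>0 \<le> t\<close> by (simp add: mult_nonneg_nonpos)
  qed
  moreover have "closed {f :: 'a \<Rightarrow> real. f v \<le> 0}"
    by (intro closed_Collect_le continuous_on_product_coordinates continuous_on_const)
  ultimately have "closure (cone_diff (subdiff0 g) xs) \<subseteq> {f. f v \<le> 0}"
    by (rule closure_minimal)
  then show "k v \<le> 0" using k by (auto simp: wstar_closure_def)
qed (simp add: wstar_closure_def)

lemma polar_le_set_subset_wstar_closure_cone_diff:
  fixes g :: "'a::{real_vector,t2_space} \<Rightarrow> ereal"
  assumes lc: "locally_convex_tvs TYPE('a)" and g: "g \<in> Gamma" "sublinear_efun g"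
    and xs: "xs \<in> topdual"
  shows "{k \<in> topdual. \<forall>v\<in>le_set g xs. k v \<le> 0} \<subseteq> wstar_closure (cone_diff (subdiff0 g) xs)"
proof (clarsimp simp: wstar_closure_def, rule ccontr)
  fix k assume k: "k \<in> topdual" "\<forall>v\<in>le_set g xs. k v \<le> 0"
    and "k \<notin> closure (cone_diff (subdiff0 g) xs)"
  moreover obtain y0 where "y0 \<in> subdiff0 g"
    using subdiff0_exceeds[OF lc g, of "-1" 0] Gamma_sublinear_efun_zero[OF lc g] by auto
  ultimately have "\<exists>F a. finite F \<and> (\<forall>f\<in>cone_diff (subdiff0 g) xs. (\<Sum>x\<in>F. a x * f x) \<le> 0)
      \<and> (\<Sum>x\<in>F. a x * k x) > 0"
    by (intro cone_separation_finite_coordinates cone_diff_zero cone_diff_scale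
        cone_diff_add subdiff0_convex_comb)
  then obtain F a where F: "finite F"
    and a: "\<And>f. f \<in> cone_diff (subdiff0 g) xs \<Longrightarrow> (\<Sum>x\<in>F. a x * f x) \<le> 0"
      "(\<Sum>x\<in>F. a x * k x) > 0"
    by blast
  define v where "v = (\<Sum>x\<in>F. a x *\<^sub>R x)"
  have eval: "f v = (\<Sum>x\<in>F. a x * f x)" if "linear f" for f
    unfolding v_def using that by (simp add: linear_sum linear_scale)
  have "y v \<le> xs v" if "y \<in> subdiff0 g" for y
  proof -
    have "(\<lambda>x. 1 * (y x - xs x)) \<in> cone_diff (subdiff0 g) xs"
      unfolding cone_diff_def using that by (intro CollectI exI conjI) auto
    from a(1)[OF this] have "(\<Sum>x\<in>F. a x * (y x - xs x)) \<le> 0" by simp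
    then show ?thesis
      using eval[of y] eval[of xs] that xs
      by (simp add: linear_if_topdual subdiff0_def right_diff_distrib sum_subtractf)
  qed
  then have "v \<in> le_set g xs" using le_iff_subdiff0[OF lc g] by (simp add: le_set_def)
  then have "k v \<le> 0" using k(2) by blast
  moreover have "k v = (\<Sum>x\<in>F. a x * k x)" using eval[of k] k(1) by (simp add: linear_if_topdual)
  ultimately show False using a(2) by simp
qed

theorem wstar_closure_cone_diff_subdiff0:
  fixes g :: "'a::{real_vector,t2_space} \<Rightarrow> ereal"
  assumes "locally_convex_tvs TYPE('a)" "g \<in> Gamma" "sublinear_efun g" "xs \<in> topdual"
  shows "wstar_closure (cone_diff (subdiff0 g) xs) = {k \<in> topdual. \<forall>v\<in>le_set g xs. k v \<le> 0}"
  using wstar_closure_cone_diff_subdiff0_subset polar_le_set_subset_wstar_closure_cone_diff assms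
  by (intro equalityI) blast+

section \<open>Level sets\<close>

lemma Lset_subset_le_set: "Lset g xs \<subseteq> le_set g xs"
  by (auto simp: Lset_def le_set_def)

context
  fixes g :: "'a::real_vector \<Rightarrow> ereal" and xs :: "'a \<Rightarrow> real"
  assumes g: "sublinear_efun g" "\<And>x. g x \<noteq> -\<infinity>" "g 0 = 0" and xs: "linear xs"
begin

lemma le_set_subset_Lset:
  assumes "subspace (le_set g xs)"
  shows "le_set g xs \<subseteq> Lset g xs"
proof
  fix x assume x: "x \<in> le_set g xs"
  with assms have "- x \<in> le_set g xs" by (rule subspace_neg)
  with x have le: "g x \<le> ereal (xs x)" "g (- x) \<le> ereal (- xs x)"
    by (auto simp: le_set_def linear_neg[OF xs])
  then obtain c1 c2 where c: "g x = ereal c1" "g (- x) = ereal c2"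
    using g(2)[of x] g(2)[of "- x"] by (cases "g x"; cases "g (- x)") auto
  have "g 0 \<le> g x + g (- x)" using sublinear_efun_add[OF g(1), of x "- x"] by simp
  then have "0 \<le> c1 + c2" using c g(3) by (simp add: zero_ereal_def)
  then show "x \<in> Lset g xs" using le c by (simp add: Lset_def)
qed

lemma subspace_le_set_if_Lset_eq:
  assumes eq: "Lset g xs = le_set g xs"
  shows "subspace (le_set g xs)"
proof (rule subspaceI)
  show "0 \<in> le_set g xs" using g(3) by (simp add: le_set_def linear_0[OF xs])
next
  fix x y assume "x \<in> le_set g xs" "y \<in> le_set g xs"
  then have "g x + g y \<le> ereal (xs x) + ereal (xs y)" by (intro add_mono) (auto simp: le_set_def)
  then show "x + y \<in> le_set g xs"
    using sublinear_efun_add[OF g(1), of x y] by (simp add: le_set_def linear_add[OF xs])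
next
  have pos: "c *\<^sub>R x \<in> le_set g xs" if "x \<in> le_set g xs" "c > 0" for c x
  proof -
    have "g (c *\<^sub>R x) = ereal c * g x" using sublinear_efun_scaleR[OF g(1) that(2)] .
    also have "\<dots> \<le> ereal c * ereal (xs x)"
      using that by (intro ereal_mult_left_mono) (auto simp: le_set_def)
    finally show ?thesis by (simp add: le_set_def linear_scale[OF xs])
  qed
  have neg: "- x \<in> le_set g xs" if "x \<in> le_set g xs" for x
  proof -
    have "x \<in> Lset g xs" using that eq by simp
    then show ?thesis by (simp add: Lset_def le_set_def linear_neg[OF xs])
  qed
  fix c :: real and x assume x: "x \<in> le_set g xs"
  consider "c > 0" | "c = 0" | "c < 0" by linarith
  then show "c *\<^sub>R x \<in> le_set g xs"
  proof cases
    case 2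
    then show ?thesis using g(3) by (simp add: le_set_def linear_0[OF xs])
  next
    case 3
    then show ?thesis using pos[OF neg[OF x], of "- c"] by simp
  qed (use pos x in blast)
qed

lemma subspace_le_set_iff_Lset_eq: "subspace (le_set g xs) \<longleftrightarrow> Lset g xs = le_set g xs"
  using le_set_subset_Lset Lset_subset_le_set subspace_le_set_if_Lset_eq by blast

end

lemma subdiff0_if_subspace_le_set:
  fixes g :: "'a::{real_vector,topological_space} \<Rightarrow> ereal"
  assumes g: "sublinear_efun g" "\<And>x. g x \<noteq> -\<infinity>" "g 0 = 0"
    and xs: "xs \<in> topdual" and C: "subspace (le_set g xs)"
  shows "xs \<in> subdiff0 g"
proof -
  have "ereal (xs x) \<le> g x" for x
  proof (rule ccontr)
    assume "\<not> ereal (xs x) \<le> g x"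
    then have "x \<in> le_set g xs" "g x \<noteq> ereal (xs x)" by (auto simp: le_set_def)
    then show False
      using le_set_subset_Lset[OF g linear_if_topdual[OF xs] C] by (auto simp: Lset_def)
  qed
  then show ?thesis using xs by (simp add: subdiff0_def)
qed

lemma eq_set_eq_le_set_if_subdiff0: "xs \<in> subdiff0 g \<Longrightarrow> eq_set g xs = le_set g xs"
  by (auto simp: subdiff0_def eq_set_def le_set_def intro: order.antisym)

lemma fun_subspace_polar_subspace:
  assumes "subspace V"
  shows "fun_subspace {k \<in> topdual. \<forall>v\<in>V. k v \<le> 0}"
proof -
  have "k v = 0" if "k \<in> topdual" "\<forall>v\<in>V. k v \<le> 0" "v \<in> V" for k v
    using that subspace_neg[OF assms] linear_neg[OF linear_if_topdual[OF that(1)], of v]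
    by (metis neg_le_0_iff_le order.antisym)
  then have "{k \<in> topdual. \<forall>v\<in>V. k v \<le> 0} = {k \<in> topdual. \<forall>v\<in>V. k v = 0}" by force
  moreover have "fun_subspace {k \<in> topdual. \<forall>v\<in>V. k v = 0}"
    unfolding fun_subspace_def
    by (auto simp: zero_in_topdual
        topdual_lincomb[of _ _ 1 1, simplified] topdual_lincomb[of _ _ _ 0, simplified])
  ultimately show ?thesis by simp
qed

lemma le_set_subset_Lset_if_qri:
  fixes g :: "'a::{real_vector,t2_space} \<Rightarrow> ereal"
  assumes lc: "locally_convex_tvs TYPE('a)" and g: "g \<in> Gamma" "sublinear_efun g"
    and xs: "xs \<in> topdual" and qri: "xs \<in> qri (subdiff0 g)"
  shows "le_set g xs \<subseteq> Lset g xs"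
proof
  fix x assume x: "x \<in> le_set g xs"
  define P where "P = wstar_closure (cone_diff (subdiff0 g) xs)"
  have S: "xs \<in> subdiff0 g" and P: "fun_subspace P"
    using qri by (simp_all add: qri_eq_cone_diff P_def)
  have "y (- x) \<le> - xs x" if y: "y \<in> subdiff0 g" for y
  proof -
    have "(\<lambda>w. y w - xs w) \<in> topdual"
      using topdual_lincomb[of y xs 1 "-1"] y xs by (simp add: subdiff0_def)
    moreover have "(\<lambda>w. 1 * (y w - xs w)) \<in> cone_diff (subdiff0 g) xs"
      unfolding cone_diff_def using y by (intro CollectI exI conjI) auto
    ultimately have yP: "(\<lambda>w. y w - xs w) \<in> P"
      using closure_subset unfolding P_def wstar_closure_def by auto
    \<comment> \<open>\<open>P\<close> is a linear space, so it also contains \<open>xs - y\<close>\<close>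
    have "(\<lambda>w. c * f w) \<in> P" if "f \<in> P" for c f
      using P that by (simp add: fun_subspace_def)
    from this[OF yP, of "-1"] have "(\<lambda>w. -1 * (y w - xs w)) \<in> P" .
    then have "-1 * (y x - xs x) \<le> 0"
      using wstar_closure_cone_diff_subdiff0_subset[of g xs] x unfolding P_def by blast
    then show ?thesis using linear_neg[OF linear_if_topdual, of y x] y by (simp add: subdiff0_def)
  qed
  then have "g (- x) \<le> ereal (- xs x)" using le_iff_subdiff0[OF lc g] by blast
  moreover have "ereal (xs (- x)) \<le> g (- x)" using S by (simp add: subdiff0_def)
  ultimately show "x \<in> Lset g xs"
    using x eq_set_eq_le_set_if_subdiff0[OF S] linear_neg[OF linear_if_topdual[OF xs], of x]
    by (auto simp: Lset_def eq_set_def intro: order.antisym)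
qed

theorem qri_subdiff0_iff_subspace_le_set:
  fixes g :: "'a::{real_vector,t2_space} \<Rightarrow> ereal"
  assumes lc: "locally_convex_tvs TYPE('a)" and g: "g \<in> Gamma" "sublinear_efun g"
    and xs: "xs \<in> topdual"
  shows "xs \<in> qri (subdiff0 g) \<longleftrightarrow> subspace (le_set g xs)"
proof
  have g_props: "sublinear_efun g" "\<And>x. g x \<noteq> -\<infinity>" "g 0 = 0"
    using g Gamma_not_MInfty Gamma_sublinear_efun_zero[OF lc g] by auto
  show "subspace (le_set g xs)" if "xs \<in> qri (subdiff0 g)"
    using le_set_subset_Lset_if_qri[OF lc g xs that] Lset_subset_le_set
      subspace_le_set_if_Lset_eq[OF g_props linear_if_topdual[OF xs]]
    by blast
  show "xs \<in> qri (subdiff0 g)" if "subspace (le_set g xs)"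
    using subdiff0_if_subspace_le_set[OF g_props xs that] fun_subspace_polar_subspace[OF that]
    by (simp add: qri_eq_cone_diff wstar_closure_cone_diff_subdiff0[OF lc g xs])
qed

theorem proposition5:
  fixes g :: "'a::{real_vector,t2_space} \<Rightarrow> ereal" and xs :: "'a \<Rightarrow> real"
  assumes "locally_convex_tvs TYPE('a)"
    and "\<exists>x::'a. x \<noteq> 0"
    and "g \<in> Gamma" and "sublinear_efun g"
    and "xs \<in> topdual"
  shows "(xs \<in> qri (subdiff0 g) \<longleftrightarrow> subspace (le_set g xs))
    \<and> (subspace (le_set g xs) \<longleftrightarrow> Lset g xs = le_set g xs)
    \<and> (subspace (le_set g xs) \<longleftrightarrow> xs \<in> subdiff0 g \<and> subspace (eq_set g xs))
    \<and> (xs \<in> subdiff0 g \<and> subspace (eq_set g xs) \<longleftrightarrow> xs \<in> subdiff0 g \<and> Lset g xs = eq_set g xs)"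
proof -
  note lc = assms(1) and g = assms(3,4) and xs = assms(5)
  have g_props: "sublinear_efun g" "\<And>x. g x \<noteq> -\<infinity>" "g 0 = 0"
    using g Gamma_not_MInfty Gamma_sublinear_efun_zero[OF lc g] by auto
  have xs_lin: "linear xs" using linear_if_topdual[OF xs] .
  note C_iff_L = subspace_le_set_iff_Lset_eq[OF g_props xs_lin]
  note S_if_C = subdiff0_if_subspace_le_set[OF g_props xs]
  show ?thesis
  proof (intro conjI)
    show "xs \<in> qri (subdiff0 g) \<longleftrightarrow> subspace (le_set g xs)"
      by (rule qri_subdiff0_iff_subspace_le_set[OF lc g xs])
    show "subspace (le_set g xs) \<longleftrightarrow> Lset g xs = le_set g xs" by (rule C_iff_L)
    note E_eq_C = eq_set_eq_le_set_if_subdiff0[of xs g]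
    show "subspace (le_set g xs) \<longleftrightarrow> xs \<in> subdiff0 g \<and> subspace (eq_set g xs)"
    proof
      assume C: "subspace (le_set g xs)"
      then have "xs \<in> subdiff0 g" by (rule S_if_C)
      with C show "xs \<in> subdiff0 g \<and> subspace (eq_set g xs)" using E_eq_C by simp
    qed (use E_eq_C in force)
    show "xs \<in> subdiff0 g \<and> subspace (eq_set g xs) \<longleftrightarrow> xs \<in> subdiff0 g \<and> Lset g xs = eq_set g xs"
      using C_iff_L E_eq_C by (cases "xs \<in> subdiff0 g") simp_all
  qed
qed

end
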